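(* Let $i\ge 0$ be an integer. Every disk of an $\alpha_i$-metric graph $G$ is $d^{2i-1}$-convex. In particular, the center $C(G)$ of $G$ is $d^{2i-1}$-convex.
   Context: All graphs are finite, connected, unweighted, undirected, simple; $d(u,v)$ is the shortest-path distance. $I(u,v)=\{x: d(u,x)+d(x,v)=d(u,v)\}$. A graph is $\alpha_i$-metric if for all vertices $u,v,w,x$: whenever $v\in I(u,w)$, $w\in I(v,x)$ and $v,w$ are adjacent, then $d(u,x)\ge d(u,v)+d(v,x)-i$. A disk is $D(v,r)=\{u: d(u,v)\le r\}$. A vertex set $S$ is $d^k$-convex if for all $x,y\in S$ with $d(x,y)\ge k$, $I(x,y)\subseteq S$. $e(v)=\max_u d(u,v)$, $rad(G)=\min_v e(v)$, $C(G)=\{v:e(v)=rad(G)\}$. *)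

theory Defs
  imports Main
begin

definition simple_graph :: "'a set \<Rightarrow> ('a \<Rightarrow> 'a \<Rightarrow> bool) \<Rightarrow> bool" where
  "simple_graph V E \<longleftrightarrow> finite V \<and> V \<noteq> {} \<and>
     (\<forall>u v. E u v \<longrightarrow> u \<in> V \<and> v \<in> V) \<and>
     (\<forall>u v. E u v \<longrightarrow> E v u) \<and> (\<forall>u. \<not> E u u)"

definition is_walk :: "'a set \<Rightarrow> ('a \<Rightarrow> 'a \<Rightarrow> bool) \<Rightarrow> 'a list \<Rightarrow> bool" where
  "is_walk V E xs \<longleftrightarrow> xs \<noteq> [] \<and> set xs \<subseteq> V \<and>
     (\<forall>j. Suc j < length xs \<longrightarrow> E (xs ! j) (xs ! Suc j))"

definition connected_graph :: "'a set \<Rightarrow> ('a \<Rightarrow> 'a \<Rightarrow> bool) \<Rightarrow> bool" where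
  "connected_graph V E \<longleftrightarrow> simple_graph V E \<and>
     (\<forall>u\<in>V. \<forall>v\<in>V. \<exists>xs. is_walk V E xs \<and> hd xs = u \<and> last xs = v)"

definition gdist :: "'a set \<Rightarrow> ('a \<Rightarrow> 'a \<Rightarrow> bool) \<Rightarrow> 'a \<Rightarrow> 'a \<Rightarrow> nat" where
  "gdist V E u v = (LEAST n. \<exists>xs. is_walk V E xs \<and> hd xs = u \<and> last xs = v \<and> length xs = Suc n)"

definition interval :: "'a set \<Rightarrow> ('a \<Rightarrow> 'a \<Rightarrow> bool) \<Rightarrow> 'a \<Rightarrow> 'a \<Rightarrow> 'a set" where
  "interval V E u v = {x \<in> V. gdist V E u x + gdist V E x v = gdist V E u v}"

definition alpha_metric :: "'a set \<Rightarrow> ('a \<Rightarrow> 'a \<Rightarrow> bool) \<Rightarrow> nat \<Rightarrow> bool" where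
  "alpha_metric V E i \<longleftrightarrow> (\<forall>u\<in>V. \<forall>v\<in>V. \<forall>w\<in>V. \<forall>x\<in>V.
     v \<in> interval V E u w \<and> w \<in> interval V E v x \<and> E v w \<longrightarrow>
     int (gdist V E u x) \<ge> int (gdist V E u v) + int (gdist V E v x) - int i)"

definition disk :: "'a set \<Rightarrow> ('a \<Rightarrow> 'a \<Rightarrow> bool) \<Rightarrow> 'a \<Rightarrow> nat \<Rightarrow> 'a set" where
  "disk V E v r = {u \<in> V. gdist V E u v \<le> r}"

text \<open>d^k-convexity; k is an integer (k = 2i-1 may be -1).\<close>
definition dk_convex :: "'a set \<Rightarrow> ('a \<Rightarrow> 'a \<Rightarrow> bool) \<Rightarrow> int \<Rightarrow> 'a set \<Rightarrow> bool" where
  "dk_convex V E k S \<longleftrightarrow> (\<forall>x\<in>S. \<forall>y\<in>S. int (gdist V E x y) \<ge> k \<longrightarrow> interval V E x y \<subseteq> S)"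

definition ecc :: "'a set \<Rightarrow> ('a \<Rightarrow> 'a \<Rightarrow> bool) \<Rightarrow> 'a \<Rightarrow> nat" where
  "ecc V E v = Max ((\<lambda>u. gdist V E u v) ` V)"

definition radius :: "'a set \<Rightarrow> ('a \<Rightarrow> 'a \<Rightarrow> bool) \<Rightarrow> nat" where
  "radius V E = Min (ecc V E ` V)"

definition center :: "'a set \<Rightarrow> ('a \<Rightarrow> 'a \<Rightarrow> bool) \<Rightarrow> 'a set" where
  "center V E = {v \<in> V. ecc V E v = radius V E}"

end

(*
  Let x, y lie in the disk D(c, r) with d(x, y) >= 2i - 1 and suppose some vertex of I(x, y)
  lies outside it.  Among the vertices of I(x, y) farthest from c take z1 closest to x and z2
  closest to y.  The neighbour of z1 on a geodesic towards x lies in I(x, y) and is one step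
  closer to c, so the alpha_i condition for y, z1, this neighbour and c gives
  d(y, c) >= d(y, z1) + d(z1, c) - i, whence d(y, z1) < i; symmetrically d(x, z2) < i.
  As z1 is no farther from x than z2, d(x, y) <= d(x, z2) + d(y, z1) <= 2i - 2, a contradiction.
  The center is the intersection of the disks D(u, rad G), and d^k-convexity is preserved
  under intersections.
*)
theory Submission
  imports Defs
begin

lemma is_walk_iff_successively:
  "is_walk V E xs \<longleftrightarrow> xs \<noteq> [] \<and> set xs \<subseteq> V \<and> successively E xs"
  by (simp add: is_walk_def successively_conv_nth)

lemma is_walk_append:
  assumes "is_walk V E xs" "is_walk V E ys" "last xs = hd ys"
  shows "is_walk V E (xs @ tl ys)"
proof -
  obtain y ys' where ys: "ys = y # ys'"
    using assms(2) by (cases ys) (auto simp: is_walk_def)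
  show ?thesis
    using assms ys
    by (auto simp: is_walk_iff_successively successively_append_iff successively_Cons)
qed

lemma ex_max_least_tiebreak:
  fixes f :: "'a \<Rightarrow> 'b::linorder" and g :: "'a \<Rightarrow> 'c::linorder"
  assumes "finite S" "S \<noteq> {}"
  obtains z where "z \<in> S" "\<forall>w\<in>S. f w \<le> f z" "\<forall>w\<in>S. f w = f z \<longrightarrow> g z \<le> g w"
proof -
  define M where "M = {w \<in> S. f w = Max (f ` S)}"
  have "Max (f ` S) \<in> f ` S"
    using assms by simp
  then have "finite M" "M \<noteq> {}"
    using assms(1) by (auto simp: M_def)
  then have "Min (g ` M) \<in> g ` M" "\<forall>w\<in>M. Min (g ` M) \<le> g w"
    by simp_all
  then obtain z where "z \<in> M" "\<forall>w\<in>M. g z \<le> g w"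
    by force
  with assms(1) show ?thesis
    by (intro that[of z]) (auto simp: M_def)
qed

lemma dk_convex_INT:
  assumes "\<And>u. u \<in> A \<Longrightarrow> dk_convex V E k (S u)"
  shows "dk_convex V E k (\<Inter>u\<in>A. S u)"
  unfolding dk_convex_def
proof (intro ballI impI subsetI INT_I)
  fix x y z u
  assume "x \<in> (\<Inter>u\<in>A. S u)" "y \<in> (\<Inter>u\<in>A. S u)" "k \<le> int (gdist V E x y)"
    and "z \<in> interval V E x y" and u: "u \<in> A"
  with assms[OF u] show "z \<in> S u"
    unfolding dk_convex_def by blast
qed

context
  fixes V :: "'a set" and E :: "'a \<Rightarrow> 'a \<Rightarrow> bool"
  assumes connected: "connected_graph V E"
begin

lemma edge_sym: "E u v \<Longrightarrow> E v u"
  and edge_vertices: "E u v \<Longrightarrow> u \<in> V \<and> v \<in> V"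
  and edge_irrefl: "\<not> E u u"
  and finite_vertices: "finite V"
  and vertices_nonempty: "V \<noteq> {}"
  using connected by (auto simp: connected_graph_def simple_graph_def)

lemma is_walk_rev:
  assumes "is_walk V E xs"
  shows "is_walk V E (rev xs)"
proof -
  have "successively E xs"
    using assms by (simp add: is_walk_iff_successively)
  then have "successively (\<lambda>x y. E y x) xs"
    by (rule successively_mono) (rule edge_sym)
  with assms show ?thesis
    by (simp add: is_walk_iff_successively)
qed

lemma shortest_walk:
  assumes "u \<in> V" "v \<in> V"
  obtains xs where "is_walk V E xs" "hd xs = u" "last xs = v" "length xs = Suc (gdist V E u v)"
proof -
  obtain xs where "is_walk V E xs" "hd xs = u" "last xs = v"
    using connected assms by (auto simp: connected_graph_def)
  moreover from this have "length xs = Suc (length xs - 1)"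
    by (cases xs) (auto simp: is_walk_def)
  ultimately have "\<exists>n xs. is_walk V E xs \<and> hd xs = u \<and> last xs = v \<and> length xs = Suc n"
    by blast
  then have "\<exists>xs. is_walk V E xs \<and> hd xs = u \<and> last xs = v \<and> length xs = Suc (gdist V E u v)"
    unfolding gdist_def by (rule LeastI_ex)
  with that show ?thesis
    by blast
qed

lemma gdist_less_length:
  assumes "is_walk V E xs" "hd xs = u" "last xs = v"
  shows "gdist V E u v < length xs"
proof -
  obtain n where n: "length xs = Suc n"
    using assms(1) by (cases xs) (auto simp: is_walk_def)
  have "gdist V E u v \<le> n"
    unfolding gdist_def by (rule Least_le) (use assms n in blast)
  with n show ?thesis by simp
qed

lemma gdist_sym:
  assumes "u \<in> V" "v \<in> V"
  shows "gdist V E u v = gdist V E v u"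
proof -
  have "gdist V E b a \<le> gdist V E a b" if ab: "a \<in> V" "b \<in> V" for a b
  proof -
    obtain xs where xs: "is_walk V E xs" "hd xs = a" "last xs = b"
      "length xs = Suc (gdist V E a b)"
      using shortest_walk[OF ab] .
    then have "xs \<noteq> []"
      by (simp add: is_walk_def)
    with xs have "gdist V E b a < length (rev xs)"
      by (intro gdist_less_length is_walk_rev) (auto simp: hd_rev last_rev)
    with xs show ?thesis by simp
  qed
  with assms show ?thesis
    by (meson le_antisym)
qed

lemma gdist_triangle:
  assumes "u \<in> V" "v \<in> V" "w \<in> V"
  shows "gdist V E u w \<le> gdist V E u v + gdist V E v w"
proof -
  obtain xs where xs: "is_walk V E xs" "hd xs = u" "last xs = v"
    "length xs = Suc (gdist V E u v)"
    using shortest_walk assms by metis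
  obtain ys where ys: "is_walk V E ys" "hd ys = v" "last ys = w"
    "length ys = Suc (gdist V E v w)"
    using shortest_walk assms by metis
  have "xs \<noteq> []" "ys \<noteq> []"
    using xs ys by (auto simp: is_walk_def)
  moreover have "last (xs @ tl ys) = w"
    using xs ys \<open>ys \<noteq> []\<close> by (cases ys) auto
  ultimately have "gdist V E u w < length (xs @ tl ys)"
    using xs ys by (intro gdist_less_length is_walk_append) auto
  with xs ys show ?thesis by simp
qed

lemma gdist_eq_0_imp_eq:
  assumes "u \<in> V" "v \<in> V" "gdist V E u v = 0"
  shows "u = v"
proof -
  obtain xs where "hd xs = u" "last xs = v" "length xs = 1"
    using shortest_walk assms by (metis One_nat_def)
  then show ?thesis
    by (auto simp: length_Suc_conv)
qed

lemma gdist_edge: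
  assumes "E u v"
  shows "gdist V E u v = 1"
proof -
  have "is_walk V E [u, v]"
    using assms edge_vertices by (auto simp: is_walk_iff_successively)
  then have "gdist V E u v < 2"
    using gdist_less_length[of "[u, v]" u v] by simp
  moreover have "u \<noteq> v"
    using assms edge_irrefl by blast
  then have "gdist V E u v \<noteq> 0"
    using assms edge_vertices gdist_eq_0_imp_eq by blast
  ultimately show ?thesis by simp
qed

lemma gdist_Suc_neighbour:
  assumes "x \<in> V" "z \<in> V" "gdist V E x z = Suc n"
  obtains a where "E a z" "gdist V E x a = n"
proof -
  obtain xs where xs: "is_walk V E xs" "hd xs = x" "last xs = z" "length xs = Suc (Suc n)"
    using shortest_walk assms by metis
  define ys where "ys = butlast xs"
  have split: "xs = ys @ [z]"
    using xs by (cases xs rule: rev_cases) (auto simp: ys_def)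
  have len: "length ys = Suc n"
    using xs(4) by (simp add: ys_def)
  then have "ys \<noteq> []"
    by auto
  with xs split have ys: "is_walk V E ys" "hd ys = x" "E (last ys) z"
    by (auto simp: is_walk_iff_successively successively_append_iff)
  then have "gdist V E x (last ys) < Suc n"
    using gdist_less_length len by metis
  moreover have "gdist V E x z \<le> gdist V E x (last ys) + gdist V E (last ys) z"
    using gdist_triangle assms edge_vertices ys(3) by blast
  ultimately show ?thesis
    using that ys(3) gdist_edge assms(3) by fastforce
qed

lemma interval_sym:
  assumes "x \<in> V" "y \<in> V"
  shows "interval V E x y = interval V E y x"
  using assms gdist_sym unfolding interval_def by auto

lemma interval_predecessor:
  assumes "x \<in> V" "y \<in> V" "z \<in> interval V E x y" "z \<noteq> x"
  obtains a where "E a z" "a \<in> interval V E x y" "gdist V E x a + 1 = gdist V E x z"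
proof -
  have zV: "z \<in> V" and z: "gdist V E x z + gdist V E z y = gdist V E x y"
    using assms(3) by (auto simp: interval_def)
  have "gdist V E x z \<noteq> 0"
    using assms zV gdist_eq_0_imp_eq by metis
  then obtain n where n: "gdist V E x z = Suc n"
    using not0_implies_Suc by blast
  then obtain a where a: "E a z" "gdist V E x a = n"
    using gdist_Suc_neighbour assms(1) zV by metis
  have aV: "a \<in> V" and "gdist V E a z = 1"
    using a edge_vertices gdist_edge by auto
  then have "gdist V E a y = gdist V E z y + 1"
    using gdist_triangle[of a z y] gdist_triangle[of x a y] assms zV z n a by linarith
  then have "a \<in> interval V E x y"
    using aV z n a by (simp add: interval_def)
  with a n show ?thesis
    using that by simp
qed

lemma alpha_metric_interval_bound:
  assumes alpha: "alpha_metric V E i"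
    and x: "x \<in> V" and y: "y \<in> V" and c: "c \<in> V"
    and z: "z \<in> interval V E x y" "z \<noteq> x"
    and closer: "\<forall>w\<in>interval V E x y. gdist V E x w < gdist V E x z \<longrightarrow> gdist V E w c < gdist V E z c"
  shows "int (gdist V E y z) + int (gdist V E z c) - int i \<le> int (gdist V E y c)"
proof -
  obtain a where a: "E a z" "a \<in> interval V E x y" "gdist V E x a + 1 = gdist V E x z"
    using interval_predecessor x y z .
  have zV: "z \<in> V" and aV: "a \<in> V" and za: "E z a"
    using a edge_vertices edge_sym by auto
  have "gdist V E a c < gdist V E z c"
    using closer a by simp
  moreover have "gdist V E z c \<le> gdist V E z a + gdist V E a c"
    using gdist_triangle aV zV c by blast
  ultimately have "gdist V E z a + gdist V E a c = gdist V E z c"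
    using gdist_edge[OF za] by linarith
  then have "a \<in> interval V E z c"
    using aV by (simp add: interval_def)
  moreover have "gdist V E a y = gdist V E z y + 1"
    using a z by (simp add: interval_def)
  then have "z \<in> interval V E y a"
    using zV aV y gdist_edge[OF za] by (simp add: interval_def gdist_sym[OF y zV] gdist_sym[OF y aV])
  ultimately show ?thesis
    using alpha[unfolded alpha_metric_def, rule_format, of y z a c] y zV aV c za by simp
qed

lemma alpha_metric_interval_farthest:
  assumes alpha: "alpha_metric V E i"
    and x: "x \<in> V" and y: "y \<in> V" and c: "c \<in> V"
    and z: "z \<in> interval V E x y" "gdist V E x c < gdist V E z c"
  obtains z' where "z' \<in> interval V E x y"
    "\<forall>w\<in>interval V E x y. gdist V E w c \<le> gdist V E z' c"
    "\<forall>w\<in>interval V E x y. gdist V E w c = gdist V E z' c \<longrightarrow> gdist V E x z' \<le> gdist V E x w"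
    "int (gdist V E y z') + int (gdist V E z' c) - int i \<le> int (gdist V E y c)"
proof -
  let ?I = "interval V E x y"
  have "finite ?I" "?I \<noteq> {}"
    using finite_vertices z by (auto intro: rev_finite_subset simp: interval_def)
  then obtain z' where z': "z' \<in> ?I" and far: "\<forall>w\<in>?I. gdist V E w c \<le> gdist V E z' c"
    and near: "\<forall>w\<in>?I. gdist V E w c = gdist V E z' c \<longrightarrow> gdist V E x z' \<le> gdist V E x w"
    using ex_max_least_tiebreak[where f = "\<lambda>w. gdist V E w c" and g = "gdist V E x"] by blast
  have "z' \<noteq> x"
    using z far by fastforce
  moreover have "\<forall>w\<in>?I. gdist V E x w < gdist V E x z' \<longrightarrow> gdist V E w c < gdist V E z' c"
    using far near by (meson le_less not_le)
  ultimately have "int (gdist V E y z') + int (gdist V E z' c) - int i \<le> int (gdist V E y c)"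
    by (rule alpha_metric_interval_bound[OF alpha x y c z'])
  with z' far near show ?thesis
    using that by blast
qed

lemma alpha_metric_interval_gdist_le_max:
  assumes alpha: "alpha_metric V E i"
    and x: "x \<in> V" and y: "y \<in> V" and c: "c \<in> V"
    and long: "2 * int i - 1 \<le> int (gdist V E x y)" and z: "z \<in> interval V E x y"
  shows "gdist V E z c \<le> max (gdist V E x c) (gdist V E y c)"
proof (rule ccontr)
  assume "\<not> ?thesis"
  then have xz: "gdist V E x c < gdist V E z c" and yz: "gdist V E y c < gdist V E z c"
    by simp_all
  moreover have z_yx: "z \<in> interval V E y x"
    using z interval_sym[OF x y] by simp
  ultimately obtain z1 z2 where
    z1: "z1 \<in> interval V E x y" and z2: "z2 \<in> interval V E x y"
    and far1: "\<forall>w\<in>interval V E x y. gdist V E w c \<le> gdist V E z1 c"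
    and near1: "\<forall>w\<in>interval V E x y. gdist V E w c = gdist V E z1 c \<longrightarrow> gdist V E x z1 \<le> gdist V E x w"
    and far2: "\<forall>w\<in>interval V E x y. gdist V E w c \<le> gdist V E z2 c"
    and bound1: "int (gdist V E y z1) + int (gdist V E z1 c) - int i \<le> int (gdist V E y c)"
    and bound2: "int (gdist V E x z2) + int (gdist V E z2 c) - int i \<le> int (gdist V E x c)"
    using alpha_metric_interval_farthest[OF alpha x y c z]
      alpha_metric_interval_farthest[OF alpha y x c z_yx] interval_sym[OF x y] by metis
  have "gdist V E z1 c = gdist V E z2 c"
    using far1 far2 z1 z2 by (meson le_antisym)
  with near1 z2 have "gdist V E x z1 \<le> gdist V E x z2"
    by simp
  moreover have "gdist V E x z1 + gdist V E y z1 = gdist V E x y"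
    "gdist V E x z2 + gdist V E y z2 = gdist V E x y"
    using z1 z2 gdist_sym[OF y, of z1] gdist_sym[OF y, of z2] by (simp_all add: interval_def)
  moreover have "gdist V E z c \<le> gdist V E z1 c"
    using far1 z by blast
  ultimately show False
    using bound1 bound2 long \<open>gdist V E z1 c = gdist V E z2 c\<close> xz yz by linarith
qed

lemma disk_dk_convex:
  assumes "alpha_metric V E i" "c \<in> V"
  shows "dk_convex V E (2 * int i - 1) (disk V E c r)"
  unfolding dk_convex_def
proof (intro ballI impI subsetI)
  fix x y z
  assume "x \<in> disk V E c r" "y \<in> disk V E c r" "2 * int i - 1 \<le> int (gdist V E x y)"
    and z: "z \<in> interval V E x y"
  then have "gdist V E z c \<le> max (gdist V E x c) (gdist V E y c)"
    "max (gdist V E x c) (gdist V E y c) \<le> r"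
    using alpha_metric_interval_gdist_le_max[OF assms(1) _ _ assms(2)] by (auto simp: disk_def)
  with z show "z \<in> disk V E c r"
    by (auto simp: disk_def interval_def)
qed

lemma ecc_le_iff: "ecc V E v \<le> k \<longleftrightarrow> (\<forall>u\<in>V. gdist V E u v \<le> k)"
  using finite_vertices vertices_nonempty by (simp add: ecc_def)

lemma radius_le_ecc: "v \<in> V \<Longrightarrow> radius V E \<le> ecc V E v"
  using finite_vertices by (simp add: radius_def)

lemma center_eq_INT_disk: "center V E = (\<Inter>u\<in>V. disk V E u (radius V E))"
proof -
  have "v \<in> center V E \<longleftrightarrow> v \<in> V \<and> (\<forall>u\<in>V. gdist V E u v \<le> radius V E)" for v
  proof -
    have "v \<in> center V E \<longleftrightarrow> v \<in> V \<and> ecc V E v \<le> radius V E"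
      using radius_le_ecc[of v] by (auto simp: center_def)
    then show ?thesis
      by (simp add: ecc_le_iff)
  qed
  moreover have "v \<in> (\<Inter>u\<in>V. disk V E u (radius V E)) \<longleftrightarrow>
      v \<in> V \<and> (\<forall>u\<in>V. gdist V E u v \<le> radius V E)" for v
    using vertices_nonempty gdist_sym by (auto simp: disk_def)
  ultimately show ?thesis
    by blast
qed

end

theorem lemma3:
  fixes V :: "'a set" and E :: "'a \<Rightarrow> 'a \<Rightarrow> bool" and i :: nat
  assumes "connected_graph V E"
    and "alpha_metric V E i"
  shows "(\<forall>v\<in>V. \<forall>r::nat. dk_convex V E (2 * int i - 1) (disk V E v r))
         \<and> dk_convex V E (2 * int i - 1) (center V E)"
proof
  show "\<forall>v\<in>V. \<forall>r::nat. dk_convex V E (2 * int i - 1) (disk V E v r)"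
    using disk_dk_convex[OF assms] by blast
  then show "dk_convex V E (2 * int i - 1) (center V E)"
    unfolding center_eq_INT_disk[OF assms(1)] by (intro dk_convex_INT) blast
qed

end
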